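(* Let $\widehat{\mathcal T}_\bullet$ be an arbitrary hierarchical mesh on $\widehat\Omega$, and let $E=[0,1]^{I-1}\times\{e\}\times[0,1]^{d-I}$ with $I\in\{1,\dots,d\}$, $e\in\{0,1\}$. Let $\widehat{\mathcal K}^0|_E:=(\widehat{\mathcal K}^0_1,\dots,\widehat{\mathcal K}^0_{I-1},\widehat{\mathcal K}^0_{I+1},\dots,\widehat{\mathcal K}^0_d)$ and $\widehat\Omega^k_\bullet|_E:=\{(s_1,\dots,s_{I-1},s_{I+1},\dots,s_d):(s_1,\dots,s_d)\in\widehat\Omega^k_\bullet\cap E\}$, and let $\widehat{\mathcal H}_\bullet|_E$ be the $(d-1)$-dimensional hierarchical basis for these data. Then, identifying functions on $[0,1]^{d-1}$ with functions on $E$, $\widehat{\mathcal H}_\bullet|_E=\{\widehat\beta|_E:\widehat\beta\in\widehat{\mathcal H}_\bullet,\ \widehat\beta|_E\neq0\}$. Moreover, if $\widehat\beta_1,\widehat\beta_2\in\widehat{\mathcal H}_\bullet$, $\widehat\beta_1\ne\widehat\beta_2$ and $\widehat\beta_1|_E\ne0$, then $\widehat\beta_1|_E\ne\widehat\beta_2|_E$.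
   Context: Parameter domain $\widehat\Omega=(0,1)^d$, $d\ge2$ (for $d-1=1$ the same definitions apply in one dimension). Fix degrees $p_1,\dots,p_d\ge1$. For each $i$ let $\widehat{\mathcal K}^0_i=(t^0_{i,j})_{j=0}^{N^0_i+p_i}$ be a nondecreasing vector in $[0,1]$ whose first $p_i+1$ entries are $0$, last $p_i+1$ entries are $1$, and whose interior knots have multiplicity $\le p_i$. $\widehat{\mathcal K}^{k+1}_i$ arises from $\widehat{\mathcal K}^k_i$ by inserting the midpoint of every nondegenerate knot span once. $\widehat{\mathcal B}^k$ denotes the tensor-product B-splines of degree $(p_1,\dots,p_d)$ for $\widehat{\mathcal K}^k$, and $\widehat{\mathcal T}^k$ the closed cells of level $k$ (nondegenerate boxes $\prod_i[t^k_{i,j_i-1},t^k_{i,j_i}]$). A hierarchical mesh is given by closed sets $[0,1]^d=\widehat\Omega^0_\bullet\supseteq\widehat\Omega^1_\bullet\supseteq\cdots$, each $\widehat\Omega^k_\bullet$ ($k\ge1$) a union of cells of $\widehat{\mathcal T}^{k-1}$, with $\widehat\Omega^M_\bullet=\emptyset$ for some $M$; its hierarchical basis is $\widehat{\mathcal H}_\bullet=\bigcup_k\{\widehat\beta\in\widehat{\mathcal B}^k:{\rm supp}\,\widehat\beta\subseteq\widehat\Omega^k_\bullet,\ {\rm supp}\,\widehat\beta\not\subseteq\widehat\Omega^{k+1}_\bullet\}$. *)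

theory Defs
  imports "HOL-Analysis.Analysis"
begin

(* Points of R^d are modelled as functions nat => real whose coordinates
   with index >= d vanish (coordinates are 0-based: 0,...,d-1). *)
definition carrier_pts :: "nat \<Rightarrow> (nat \<Rightarrow> real) set" where
  "carrier_pts d = {x. \<forall>i\<ge>d. x i = 0}"

definition unit_box :: "nat \<Rightarrow> (nat \<Rightarrow> real) set" where
  "unit_box d = {x \<in> carrier_pts d. \<forall>i<d. 0 \<le> x i \<and> x i \<le> 1}"

definition open_knot_vector :: "nat \<Rightarrow> real list \<Rightarrow> bool" where
  "open_knot_vector p K \<longleftrightarrow>
     sorted K \<and> 2 * (p + 1) \<le> length K \<and>
     take (p + 1) K = replicate (p + 1) 0 \<and>
     drop (length K - (p + 1)) K = replicate (p + 1) 1 \<and>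
     (\<forall>j. p + 1 \<le> j \<and> j < length K - (p + 1) \<longrightarrow> count_list K (K ! j) \<le> p)"

fun refine :: "real list \<Rightarrow> real list" where
  "refine (a # b # rest) =
     (if a < b then a # (a + b) / 2 # refine (b # rest) else a # refine (b # rest))"
| "refine xs = xs"

definition knots_lvl :: "real list \<Rightarrow> nat \<Rightarrow> real list" where
  "knots_lvl K k = (refine ^^ k) K"

(* univariate B-splines by the Cox-de Boor recursion (with x/0 = 0);
   degree-0 functions are indicators of [t_j, t_{j+1}), the last nondegenerate
   span being closed at the right endpoint (so B-splines are left-continuous at 1) *)
fun bspl :: "real list \<Rightarrow> nat \<Rightarrow> nat \<Rightarrow> real \<Rightarrow> real" where
  "bspl T 0 j t =
     (if T ! j \<le> t \<and> (t < T ! (j + 1) \<or> (t = T ! (j + 1) \<and> T ! (j + 1) = last T \<and> T ! j < T ! (j + 1)))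
      then 1 else 0)"
| "bspl T (Suc p) j t =
     (t - T ! j) / (T ! (j + p + 1) - T ! j) * bspl T p j t
   + (T ! (j + p + 2) - t) / (T ! (j + p + 2) - T ! (j + 1)) * bspl T p (j + 1) t"

definition nbsp :: "real list \<Rightarrow> nat \<Rightarrow> nat" where
  "nbsp T p = length T - p - 1"

definition bsplines :: "nat \<Rightarrow> real list list \<Rightarrow> nat list \<Rightarrow> nat \<Rightarrow> ((nat \<Rightarrow> real) \<Rightarrow> real) set" where
  "bsplines d Ks ps k =
     {(\<lambda>x. \<Prod>i<d. bspl (knots_lvl (Ks ! i) k) (ps ! i) (js i) (x i)) | js.
        \<forall>i<d. js i < nbsp (knots_lvl (Ks ! i) k) (ps ! i)}"

definition cells :: "nat \<Rightarrow> real list list \<Rightarrow> nat \<Rightarrow> (nat \<Rightarrow> real) set set" where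
  "cells d Ks k =
     {{x \<in> carrier_pts d. \<forall>i<d. knots_lvl (Ks ! i) k ! (js i) \<le> x i \<and>
                                 x i \<le> knots_lvl (Ks ! i) k ! (js i + 1)} | js.
        \<forall>i<d. js i + 1 < length (knots_lvl (Ks ! i) k) \<and>
              knots_lvl (Ks ! i) k ! (js i) < knots_lvl (Ks ! i) k ! (js i + 1)}"

definition supp :: "nat \<Rightarrow> ((nat \<Rightarrow> real) \<Rightarrow> real) \<Rightarrow> (nat \<Rightarrow> real) set" where
  "supp d f = closure {x \<in> carrier_pts d. f x \<noteq> 0}"

definition hier_mesh :: "nat \<Rightarrow> real list list \<Rightarrow> (nat \<Rightarrow> (nat \<Rightarrow> real) set) \<Rightarrow> bool" where
  "hier_mesh d Ks \<Omega> \<longleftrightarrow>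
     \<Omega> 0 = unit_box d \<and> (\<forall>k. \<Omega> (Suc k) \<subseteq> \<Omega> k) \<and>
     (\<forall>k. \<exists>C \<subseteq> cells d Ks k. \<Omega> (Suc k) = \<Union>C) \<and>
     (\<exists>M. \<Omega> M = {})"

definition hier_basis :: "nat \<Rightarrow> real list list \<Rightarrow> nat list \<Rightarrow> (nat \<Rightarrow> (nat \<Rightarrow> real) set)
                          \<Rightarrow> ((nat \<Rightarrow> real) \<Rightarrow> real) set" where
  "hier_basis d Ks ps \<Omega> =
     (\<Union>k. {\<beta> \<in> bsplines d Ks ps k. supp d \<beta> \<subseteq> \<Omega> k \<and> \<not> supp d \<beta> \<subseteq> \<Omega> (Suc k)})"

definition del_nth :: "nat \<Rightarrow> 'a list \<Rightarrow> 'a list" where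
  "del_nth I xs = take I xs @ drop (Suc I) xs"

definition drop_coord :: "nat \<Rightarrow> (nat \<Rightarrow> real) \<Rightarrow> (nat \<Rightarrow> real)" where
  "drop_coord I x = (\<lambda>i. if i < I then x i else x (Suc i))"

definition ins_coord :: "nat \<Rightarrow> real \<Rightarrow> (nat \<Rightarrow> real) \<Rightarrow> (nat \<Rightarrow> real)" where
  "ins_coord I e y = (\<lambda>i. if i < I then y i else if i = I then e else y (i - 1))"

definition restr_set :: "nat \<Rightarrow> real \<Rightarrow> (nat \<Rightarrow> real) set \<Rightarrow> (nat \<Rightarrow> real) set" where
  "restr_set I e A = drop_coord I ` {x \<in> A. x I = e}"

definition restr_fun :: "nat \<Rightarrow> real \<Rightarrow> ((nat \<Rightarrow> real) \<Rightarrow> real) \<Rightarrow> ((nat \<Rightarrow> real) \<Rightarrow> real)" where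
  "restr_fun I e f = (\<lambda>y. f (ins_coord I e y))"

end

theory Submission
  imports Defs
begin

(*
  A tensor-product B-spline beta of level k factors as B(x_I) * gamma(x without x_I).
  At an endpoint e of a clamped knot vector exactly one univariate B-spline is nonzero,
  with value 1, so beta|_E is either 0 or the (d-1)-variate B-spline gamma of the same
  level.  In the latter case supp beta is the product of the support of that face
  B-spline, which lies in the knot span adjacent to the face, with supp gamma.  The
  regions Omega^n with n <= k+1 are unions of cells of level at most k, hence saturated
  in the normal direction over that span, so supp beta is contained in Omega^n iff
  supp gamma is contained in Omega^n|_E.  Thus beta is selected in the d-variate
  hierarchy exactly when gamma is selected at the same level in the restricted one;
  this gives the identity of the bases, and injectivity because the level of beta is
  recovered from gamma.
*)

section \<open>Splitting off one coordinate\<close>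

definition skip_idx :: "nat \<Rightarrow> nat \<Rightarrow> nat" where
  "skip_idx I i = (if i < I then i else Suc i)"

lemma inj_skip_idx: "inj (skip_idx I)"
  by (auto simp: inj_def skip_idx_def split: if_splits)

lemma skip_idx_image_lessThan:
  assumes "I < d"
  shows "skip_idx I ` {..<d - 1} = {..<d} - {I}"
proof
  show "skip_idx I ` {..<d - 1} \<subseteq> {..<d} - {I}"
    using assms by (auto simp: skip_idx_def)
  show "{..<d} - {I} \<subseteq> skip_idx I ` {..<d - 1}"
  proof
    fix i assume i: "i \<in> {..<d} - {I}"
    then have "i = skip_idx I (if i < I then i else i - 1)" "(if i < I then i else i - 1) < d - 1"
      using assms by (auto simp: skip_idx_def)
    then show "i \<in> skip_idx I ` {..<d - 1}"
      by (intro rev_image_eqI) auto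
  qed
qed

lemma all_less_split_skip_idx:
  "I < d \<Longrightarrow> (\<forall>i<d. P i) \<longleftrightarrow> P I \<and> (\<forall>i<d - 1. P (skip_idx I i))"
proof -
  assume "I < d"
  then have "(\<forall>i<d. P i) \<longleftrightarrow> P I \<and> (\<forall>i\<in>{..<d} - {I}. P i)"
    by auto
  then show ?thesis
    unfolding skip_idx_image_lessThan[OF \<open>I < d\<close>, symmetric] by auto
qed

lemma prod_lessThan_split_skip_idx:
  "I < d \<Longrightarrow> (\<Prod>i<d. h i) = h I * (\<Prod>i<d - 1. h (skip_idx I i))"
  by (simp add: prod.remove skip_idx_image_lessThan[symmetric] prod.reindex
      inj_on_subset[OF inj_skip_idx])

lemma drop_coord_apply: "drop_coord I x i = x (skip_idx I i)"
  by (simp add: drop_coord_def skip_idx_def)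

lemma drop_coord_ins_coord [simp]: "drop_coord I (ins_coord I a y) = y"
  by (auto simp: drop_coord_def ins_coord_def fun_eq_iff)

lemma ins_coord_same [simp]: "ins_coord I a y I = a"
  by (simp add: ins_coord_def)

lemma ins_coord_drop_coord [simp]: "ins_coord I (x I) (drop_coord I x) = x"
  by (auto simp: drop_coord_def ins_coord_def fun_eq_iff)

lemma ins_coord_drop_coord_upd: "ins_coord I a (drop_coord I x) = x(I := a)"
  by (auto simp: drop_coord_def ins_coord_def fun_eq_iff)

lemma continuous_on_drop_coord: "continuous_on UNIV (drop_coord I)"
  by (rule continuous_on_coordinatewise_then_product)
     (simp add: drop_coord_apply)

lemma continuous_on_ins_coord: "continuous_on UNIV (\<lambda>(a, y). ins_coord I a y)"
proof (rule continuous_on_coordinatewise_then_product)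
  fix i
  have "continuous_on UNIV (\<lambda>p :: real \<times> (nat \<Rightarrow> real). snd p j)" for j
    by (rule continuous_on_compose2[OF continuous_on_product_coordinates]) (simp_all add: continuous_on_snd)
  then show "continuous_on UNIV (\<lambda>p. (case p of (a, y) \<Rightarrow> ins_coord I a y) i)"
    by (cases "i < I"; cases "i = I")
       (simp_all add: ins_coord_def case_prod_beta continuous_on_fst)
qed

lemma homeomorphism_ins_coord:
  "homeomorphism UNIV UNIV (\<lambda>(a, y). ins_coord I a y) (\<lambda>x. (x I, drop_coord I x))"
  by (rule homeomorphismI)
     (auto intro!: continuous_on_ins_coord continuous_on_Pair continuous_on_drop_coord
        continuous_on_product_coordinates simp: image_iff)

lemma closure_image_homeomorphism:
  assumes "homeomorphism UNIV UNIV f g"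
  shows "closure (f ` S) = f ` closure S"
proof
  have g: "continuous_on UNIV g" "\<And>x. g (f x) = x" "\<And>y. f (g y) = y"
    using assms unfolding homeomorphism_def by auto
  have f_closure: "f ` closure S = g -` closure S"
    using g(2) by (auto simp: image_iff) (metis g(3))
  have "f ` S \<subseteq> g -` closure S"
    using f_closure closure_subset by blast
  then show "closure (f ` S) \<subseteq> f ` closure S"
    unfolding f_closure by (rule closure_minimal) (rule closed_vimage[OF closed_closure g(1)])
  have "continuous_on UNIV f"
    using assms unfolding homeomorphism_def by auto
  then show "f ` closure S \<subseteq> closure (f ` S)"
    by (rule image_closure_subset[OF continuous_on_subset]) (auto intro: closure_subset[THEN subsetD])
qed

lemma ins_coord_image_Times:
  "(\<lambda>(a, y). ins_coord I a y) ` (A \<times> B) = {x. x I \<in> A \<and> drop_coord I x \<in> B}"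
  by (force intro: image_eqI[where x = "(x I, drop_coord I x)" for x])

lemma drop_coord_in_carrier_pts_iff:
  assumes "I < d"
  shows "drop_coord I x \<in> carrier_pts (d - 1) \<longleftrightarrow> x \<in> carrier_pts d"
proof -
  have "drop_coord I x \<in> carrier_pts (d - 1) \<longleftrightarrow> (\<forall>i\<ge>d - 1. x (Suc i) = 0)"
    using assms by (auto simp: carrier_pts_def drop_coord_def)
  also have "\<dots> \<longleftrightarrow> (\<forall>i\<ge>d. x i = 0)"
  proof (intro iffI allI impI)
    fix i assume "\<forall>i\<ge>d - 1. x (Suc i) = 0" and "d \<le> i"
    moreover obtain j where "i = Suc j"
      using \<open>d \<le> i\<close> assms by (cases i) auto
    ultimately show "x i = 0" by simp
  qed simp
  finally show ?thesis
    unfolding carrier_pts_def by simp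
qed

lemma closed_carrier_pts: "closed (carrier_pts d)"
proof -
  have "carrier_pts d = (\<Inter>i\<in>{d..}. (\<lambda>x. x i) -` {0})"
    unfolding carrier_pts_def by auto
  then show ?thesis by (auto intro!: closed_INT closed_vimage)
qed

lemma supp_subset_carrier_pts: "supp d f \<subseteq> carrier_pts d"
  unfolding supp_def by (rule closure_minimal) (auto simp: closed_carrier_pts)

lemma supp_separate_coord:
  assumes "I < d" and "\<And>x. \<beta> x = f (x I) * \<gamma> (drop_coord I x)"
  shows "supp d \<beta> = {x. x I \<in> closure {t. f t \<noteq> 0} \<and> drop_coord I x \<in> supp (d - 1) \<gamma>}"
proof -
  let ?ins = "\<lambda>(a, y). ins_coord I a y"
  have "{x \<in> carrier_pts d. \<beta> x \<noteq> 0}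
        = ?ins ` ({t. f t \<noteq> 0} \<times> {y \<in> carrier_pts (d - 1). \<gamma> y \<noteq> 0})"
    unfolding ins_coord_image_Times using drop_coord_in_carrier_pts_iff[OF assms(1)] assms(2) by auto
  then have "supp d \<beta> = closure (?ins ` ({t. f t \<noteq> 0} \<times> {y \<in> carrier_pts (d - 1). \<gamma> y \<noteq> 0}))"
    unfolding supp_def by simp
  also have "\<dots> = ?ins ` (closure {t. f t \<noteq> 0} \<times> supp (d - 1) \<gamma>)"
    unfolding closure_image_homeomorphism[OF homeomorphism_ins_coord] closure_Times supp_def ..
  finally show ?thesis
    unfolding ins_coord_image_Times .
qed

section \<open>Tensor-product B-splines\<close>

lemma del_nth_nth:
  "I < length xs \<Longrightarrow> i < length xs - 1 \<Longrightarrow> del_nth I xs ! i = xs ! skip_idx I i"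
  by (auto simp: del_nth_def skip_idx_def nth_append min_def)

definition ins_idx :: "nat \<Rightarrow> nat \<Rightarrow> (nat \<Rightarrow> nat) \<Rightarrow> nat \<Rightarrow> nat" where
  "ins_idx I b js = (\<lambda>i. if i < I then js i else if i = I then b else js (i - 1))"

lemma ins_idx_same [simp]: "ins_idx I b js I = b"
  by (simp add: ins_idx_def)

lemma ins_idx_comp_skip_idx [simp]: "ins_idx I b js \<circ> skip_idx I = js"
  by (auto simp: ins_idx_def skip_idx_def fun_eq_iff)

definition tensor_bspl ::
    "nat \<Rightarrow> real list list \<Rightarrow> nat list \<Rightarrow> nat \<Rightarrow> (nat \<Rightarrow> nat) \<Rightarrow> (nat \<Rightarrow> real) \<Rightarrow> real" where
  "tensor_bspl d Ks ps k js = (\<lambda>x. \<Prod>i<d. bspl (knots_lvl (Ks ! i) k) (ps ! i) (js i) (x i))"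

definition bspl_indices :: "nat \<Rightarrow> real list list \<Rightarrow> nat list \<Rightarrow> nat \<Rightarrow> (nat \<Rightarrow> nat) set" where
  "bspl_indices d Ks ps k = {js. \<forall>i<d. js i < nbsp (knots_lvl (Ks ! i) k) (ps ! i)}"

lemma bsplines_eq_image: "bsplines d Ks ps k = tensor_bspl d Ks ps k ` bspl_indices d Ks ps k"
  by (auto simp: bsplines_def tensor_bspl_def bspl_indices_def)

lemma mem_hier_basis_iff:
  "\<beta> \<in> hier_basis d Ks ps \<Omega> \<longleftrightarrow>
     (\<exists>k. \<exists>js\<in>bspl_indices d Ks ps k. \<beta> = tensor_bspl d Ks ps k js
        \<and> supp d \<beta> \<subseteq> \<Omega> k \<and> \<not> supp d \<beta> \<subseteq> \<Omega> (Suc k))"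
  unfolding hier_basis_def bsplines_eq_image by blast

context
  fixes d :: nat and Ks :: "real list list" and ps :: "nat list" and I :: nat
  assumes I_less: "I < d" and length_Ks: "length Ks = d" and length_ps: "length ps = d"
begin

lemma bspl_indices_split:
  "js \<in> bspl_indices d Ks ps k \<longleftrightarrow>
     js I < nbsp (knots_lvl (Ks ! I) k) (ps ! I)
     \<and> js \<circ> skip_idx I \<in> bspl_indices (d - 1) (del_nth I Ks) (del_nth I ps) k"
  unfolding bspl_indices_def all_less_split_skip_idx[OF I_less]
  using I_less length_Ks length_ps by (auto simp: del_nth_nth)

lemma tensor_bspl_split:
  "tensor_bspl d Ks ps k js x
   = bspl (knots_lvl (Ks ! I) k) (ps ! I) (js I) (x I)
     * tensor_bspl (d - 1) (del_nth I Ks) (del_nth I ps) k (js \<circ> skip_idx I) (drop_coord I x)"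
  unfolding tensor_bspl_def prod_lessThan_split_skip_idx[OF I_less]
  using I_less length_Ks length_ps by (simp add: del_nth_nth drop_coord_apply)

lemma restr_fun_tensor_bspl:
  "restr_fun I e (tensor_bspl d Ks ps k js)
   = (\<lambda>y. bspl (knots_lvl (Ks ! I) k) (ps ! I) (js I) e
          * tensor_bspl (d - 1) (del_nth I Ks) (del_nth I ps) k (js \<circ> skip_idx I) y)"
  unfolding restr_fun_def tensor_bspl_split by simp

end

section \<open>Clamped knot vectors and B-splines at the endpoints\<close>

lemma count_list_replicate: "count_list (replicate n a) x = (if x = a then n else 0)"
  by (induction n) auto

lemma set_refine: "x \<in> set (refine xs) \<Longrightarrow> x \<in> set xs \<or> (\<exists>a\<in>set xs. \<exists>b\<in>set xs. a < b \<and> x = (a + b) / 2)"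
  by (induction xs rule: refine.induct) (auto split: if_splits)

lemma set_subset_refine: "set xs \<subseteq> set (refine xs)"
  by (induction xs rule: refine.induct) auto

lemma set_refine_subset_interval: "set xs \<subseteq> {a..b} \<Longrightarrow> set (refine xs) \<subseteq> {a..b}"
  using set_refine by fastforce

lemma count_list_refine_endpoint:
  "set xs \<subseteq> {a..b} \<Longrightarrow> c = a \<or> c = b \<Longrightarrow> count_list (refine xs) c = count_list xs c"
  by (induction xs rule: refine.induct) auto

lemma sorted_refine: "sorted xs \<Longrightarrow> sorted (refine xs)"
proof (induction xs rule: refine.induct)
  case (1 a b rest)
  then have "sorted (refine (b # rest))"
    by (cases "a < b") auto
  moreover have "a \<le> b"
    using "1.prems" by simp
  moreover have "\<forall>y\<in>set (refine (b # rest)). b \<le> y"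
    using set_refine "1.prems" by fastforce
  ultimately show ?case by auto
qed auto

lemma knots_lvl_Suc: "knots_lvl K (Suc k) = refine (knots_lvl K k)"
  by (simp add: knots_lvl_def)

lemma set_knots_lvl_mono: "m \<le> k \<Longrightarrow> set (knots_lvl K m) \<subseteq> set (knots_lvl K k)"
proof (induction k)
  case (Suc k)
  then show ?case
    using set_subset_refine[of "knots_lvl K k"] by (auto simp: knots_lvl_Suc le_Suc_eq)
qed simp

(* The part of open_knot_vector that is visibly preserved by refine. *)
definition clamped_knots :: "nat \<Rightarrow> real list \<Rightarrow> bool" where
  "clamped_knots p T \<longleftrightarrow>
     sorted T \<and> set T \<subseteq> {0..1} \<and> count_list T 0 = Suc p \<and> count_list T 1 = Suc p"

lemma clamped_knots_refine: "clamped_knots p T \<Longrightarrow> clamped_knots p (refine T)"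
  unfolding clamped_knots_def
  using sorted_refine set_refine_subset_interval count_list_refine_endpoint by auto

lemma clamped_knots_lvl: "clamped_knots p K \<Longrightarrow> clamped_knots p (knots_lvl K k)"
  by (induction k) (auto simp: knots_lvl_Suc clamped_knots_refine knots_lvl_def)

lemma clamped_knots_if_open_knot_vector:
  assumes "open_knot_vector p K"
  shows "clamped_knots p K"
proof -
  define L where "L = length K"
  define M where "M = drop (Suc p) (take (L - Suc p) K)"
  have L: "2 * Suc p \<le> L" and sorted: "sorted K"
    and zeros: "take (Suc p) K = replicate (Suc p) 0"
    and ones: "drop (L - Suc p) K = replicate (Suc p) 1"
    and mult: "\<And>j. Suc p \<le> j \<Longrightarrow> j < L - Suc p \<Longrightarrow> count_list K (K ! j) \<le> p"
    using assms by (auto simp: open_knot_vector_def L_def)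
  have "take (Suc p) (take (L - Suc p) K) = take (Suc p) K"
    using L by (simp add: min_absorb1)
  then have "take (L - Suc p) K = take (Suc p) K @ M"
    unfolding M_def by (metis append_take_drop_id)
  then have K: "K = replicate (Suc p) 0 @ M @ replicate (Suc p) 1"
    using zeros ones by (metis append_assoc append_take_drop_id)
  have length_M: "length M = L - 2 * Suc p"
    using arg_cong[OF K, of length] by (simp add: L_def)
  have not_in_M: "c \<notin> set M" if "c = 0 \<or> c = 1" for c
  proof
    assume "c \<in> set M"
    then obtain j where j: "j < length M" "M ! j = c"
      by (auto simp: in_set_conv_nth)
    then have "count_list K c \<le> p"
      using mult[of "Suc p + j"] j K length_M by (auto simp: nth_append)
    moreover have "Suc p \<le> count_list K c"
      using that by (subst K) (auto simp: count_list_replicate)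
    ultimately show False by simp
  qed
  have "set K \<subseteq> {0..1}"
    using sorted by (subst (asm) K) (auto simp: sorted_append K)
  moreover have "count_list K c = Suc p" if "c = 0 \<or> c = 1" for c
    using not_in_M[OF that] that by (subst K) (auto simp: count_list_replicate count_list_0_iff)
  ultimately show ?thesis
    using sorted by (simp add: clamped_knots_def)
qed

lemma count_list_eq_card: "count_list T c = card {j. j < length T \<and> T ! j = c}"
  by (simp add: count_list_eq_length_filter length_filter_conv_card eq_commute)

lemma card_le_count_list: "(\<And>j. j \<in> S \<Longrightarrow> j < length T \<and> T ! j = c) \<Longrightarrow> card S \<le> count_list T c"
  unfolding count_list_eq_card by (rule card_mono) auto

lemma count_list_le_if_less_nth:
  assumes "sorted T" "i < length T" "c < T ! i"
  shows "count_list T c \<le> i"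
proof -
  have "{j. j < length T \<and> T ! j = c} \<subseteq> {..<i}"
  proof
    fix j assume j: "j \<in> {j. j < length T \<and> T ! j = c}"
    then have "\<not> i \<le> j"
      using assms sorted_nth_mono[of T i j] by auto
    then show "j \<in> {..<i}"
      by simp
  qed
  then show ?thesis
    unfolding count_list_eq_card by (metis card_lessThan card_mono finite_lessThan)
qed

lemma count_list_le_if_nth_less:
  assumes "sorted T" "i < length T" "T ! i < c"
  shows "count_list T c \<le> length T - Suc i"
proof -
  have "{j. j < length T \<and> T ! j = c} \<subseteq> {Suc i..<length T}"
  proof (intro subsetI)
    fix j assume j: "j \<in> {j. j < length T \<and> T ! j = c}"
    then have "\<not> j \<le> i"
      using assms sorted_nth_mono[of T j i] by auto
    then show "j \<in> {Suc i..<length T}"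
      using j by simp
  qed
  then show ?thesis
    unfolding count_list_eq_card by (metis card_atLeastLessThan card_mono finite_atLeastLessThan)
qed

lemma count_list_add_le_length: "a \<noteq> b \<Longrightarrow> count_list T a + count_list T b \<le> length T"
  by (induction T) auto

lemma bspl_eq_0_outside:
  assumes "sorted T" "j + q + 1 < length T" "t < T ! j \<or> T ! (j + q + 1) < t"
  shows "bspl T q j t = 0"
  using assms(2,3)
proof (induction q arbitrary: j)
  case (Suc q)
  have "T ! j \<le> T ! (j + 1)" "T ! (j + 1) \<le> T ! (j + q + 2)"
    "T ! j \<le> T ! (j + q + 1)" "T ! (j + q + 1) \<le> T ! (j + q + 2)"
    using Suc.prems(1) by (auto intro: sorted_nth_mono[OF assms(1)])
  then have "bspl T q j t = 0" "bspl T q (j + 1) t = 0"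
    using Suc.prems by (auto intro!: Suc.IH)
  then show ?case by simp
qed auto

definition face_idx :: "nat \<Rightarrow> real list \<Rightarrow> real \<Rightarrow> nat" where
  "face_idx p T e = (if e = 0 then 0 else length T - Suc (Suc p))"

(* The knot span adjacent to the endpoint e: it contains the support of the B-spline
   face_idx p T e, and every nondegenerate knot span containing e contains it. *)
definition face_span :: "nat \<Rightarrow> real list \<Rightarrow> real \<Rightarrow> real set" where
  "face_span p T e = (if e = 0 then {0..T ! Suc p} else {T ! (length T - Suc (Suc p))..1})"

context
  fixes p :: nat and T :: "real list"
  assumes clamped: "clamped_knots p T"
begin

lemma clamped_sorted: "sorted T"
  using clamped by (simp add: clamped_knots_def)

lemma clamped_length: "2 * Suc p \<le> length T"
  using count_list_add_le_length[of 0 1 T] clamped by (simp add: clamped_knots_def)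

lemma clamped_nth_bounds: "i < length T \<Longrightarrow> 0 \<le> T ! i \<and> T ! i \<le> 1"
proof -
  assume "i < length T"
  then have "T ! i \<in> set T"
    by (rule nth_mem)
  then show ?thesis
    using clamped by (auto simp: clamped_knots_def)
qed

lemma clamped_nth_pos_iff:
  assumes "i < length T"
  shows "0 < T ! i \<longleftrightarrow> p < i"
proof
  assume "0 < T ! i"
  then have "count_list T 0 \<le> i"
    by (rule count_list_le_if_less_nth[OF clamped_sorted assms])
  then show "p < i"
    using clamped by (simp add: clamped_knots_def)
next
  assume "p < i"
  show "0 < T ! i"
  proof (rule ccontr)
    assume "\<not> 0 < T ! i"
    moreover have "T ! j \<le> T ! i" "0 \<le> T ! j" if "j \<le> i" for j
      using sorted_nth_mono[OF clamped_sorted that assms] clamped_nth_bounds[of j] that assms by auto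
    ultimately have "T ! j = 0" if "j \<le> i" for j
      using that by force
    then have "card {..i} \<le> count_list T 0"
      using assms by (intro card_le_count_list) auto
    then show False
      using \<open>p < i\<close> clamped by (simp add: clamped_knots_def)
  qed
qed

lemma clamped_nth_less_one_iff:
  assumes "i < length T"
  shows "T ! i < 1 \<longleftrightarrow> i < length T - Suc p"
proof
  assume "T ! i < 1"
  then have "count_list T 1 \<le> length T - Suc i"
    by (rule count_list_le_if_nth_less[OF clamped_sorted assms])
  then show "i < length T - Suc p"
    using clamped by (simp add: clamped_knots_def)
next
  assume i: "i < length T - Suc p"
  show "T ! i < 1"
  proof (rule ccontr)
    assume "\<not> T ! i < 1"
    moreover have "T ! i \<le> T ! j" "T ! j \<le> 1" if "i \<le> j" "j < length T" for j
      using sorted_nth_mono[OF clamped_sorted that] clamped_nth_bounds[of j] that by auto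
    ultimately have "T ! j = 1" if "i \<le> j" "j < length T" for j
      using that by force
    then have "card {i..<length T} \<le> count_list T 1"
      by (intro card_le_count_list) auto
    then show False
      using i clamped by (simp add: clamped_knots_def)
  qed
qed

lemma clamped_nth_eq_0: "i \<le> p \<Longrightarrow> T ! i = 0"
  using clamped_nth_pos_iff[of i] clamped_nth_bounds[of i] clamped_length by force

lemma clamped_nth_eq_1: "length T - Suc p \<le> i \<Longrightarrow> i < length T \<Longrightarrow> T ! i = 1"
  using clamped_nth_less_one_iff[of i] clamped_nth_bounds[of i] by force

lemma clamped_first_interior_le:
  assumes "x \<in> set T" "0 < x"
  shows "T ! Suc p \<le> x"
proof -
  obtain i where i: "i < length T" "T ! i = x"
    using assms(1) by (auto simp: in_set_conv_nth)
  then have "Suc p \<le> i"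
    using clamped_nth_pos_iff assms(2) by auto
  then show ?thesis
    using sorted_nth_mono[OF clamped_sorted _ i(1)] i(2) by blast
qed

lemma clamped_le_last_interior:
  assumes "x \<in> set T" "x < 1"
  shows "x \<le> T ! (length T - Suc (Suc p))"
proof -
  obtain i where i: "i < length T" "T ! i = x"
    using assms(1) by (auto simp: in_set_conv_nth)
  then have "i \<le> length T - Suc (Suc p)"
    using clamped_nth_less_one_iff assms(2) by auto
  moreover have "length T - Suc (Suc p) < length T"
    using clamped_length by simp
  ultimately show ?thesis
    using sorted_nth_mono[OF clamped_sorted] i(2) by blast
qed

lemma clamped_last: "last T = 1"
proof -
  have L: "T \<noteq> []" "length T - 1 < length T"
    using clamped_length by auto
  then have "\<not> T ! (length T - 1) < 1"
    using clamped_nth_less_one_iff by simp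
  then show ?thesis
    using clamped_nth_bounds[OF L(2)] L(1) by (simp add: last_conv_nth)
qed

lemma bspl_at_0:
  "q \<le> p \<Longrightarrow> j + q + 1 < length T \<Longrightarrow> bspl T q j 0 = (if j + q = p then 1 else 0)"
proof (induction q arbitrary: j)
  case 0
  then have "T ! j \<le> 0 \<longleftrightarrow> j \<le> p" "0 < T ! (j + 1) \<longleftrightarrow> p < j + 1"
    using clamped_nth_pos_iff[of j] clamped_nth_pos_iff[of "j + 1"] by auto
  then show ?case
    using clamped_last by auto
next
  case (Suc q)
  have IH: "bspl T q j 0 = (if j + q = p then 1 else 0)"
    "bspl T q (j + 1) 0 = (if j + 1 + q = p then 1 else 0)"
    using Suc by simp_all
  show ?case
  proof (cases "j + q = p")
    case True
    then show ?thesis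
      using IH clamped_nth_eq_0[of j] by simp
  next
    case False
    show ?thesis
    proof (cases "j + 1 + q = p")
      case True
      then have "T ! (j + 1) = 0" "0 < T ! (j + q + 2)"
        using clamped_nth_eq_0 clamped_nth_pos_iff[of "j + q + 2"] Suc.prems
        by auto
      then show ?thesis
        using IH True False by simp
    qed (use IH False in simp)
  qed
qed

lemma bspl_at_1:
  "q \<le> p \<Longrightarrow> j + q + 1 < length T \<Longrightarrow>
   bspl T q j 1 = (if j = length T - Suc (Suc p) then 1 else 0)"
proof (induction q arbitrary: j)
  case 0
  have "T ! j \<le> 1" "\<not> 1 < T ! (j + 1)"
    using clamped_nth_bounds[of j] clamped_nth_bounds[of "j + 1"] 0 by auto
  moreover have "T ! (j + 1) = 1 \<and> T ! j < 1 \<longleftrightarrow> j = length T - Suc (Suc p)"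
    using clamped_nth_less_one_iff[of j] clamped_nth_less_one_iff[of "j + 1"]
      clamped_nth_bounds[of "j + 1"] clamped_length 0
    by auto
  ultimately show ?case
    using clamped_last by auto
next
  case (Suc q)
  let ?m = "length T - Suc (Suc p)"
  have IH: "bspl T q j 1 = (if j = ?m then 1 else 0)"
    "bspl T q (j + 1) 1 = (if j + 1 = ?m then 1 else 0)"
    using Suc by simp_all
  show ?case
  proof (cases "j = ?m")
    case True
    then have "T ! j < 1" "T ! (j + q + 1) = 1"
      using clamped_nth_less_one_iff[of j] clamped_nth_eq_1[of "j + q + 1"]
        Suc.prems clamped_length by auto
    then show ?thesis
      using IH True by simp
  next
    case False
    show ?thesis
    proof (cases "j + 1 = ?m")
      case True
      then have "T ! (j + q + 2) = 1"
        using clamped_nth_eq_1[of "j + q + 2"] Suc.prems clamped_length by simp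
      then show ?thesis
        using IH True False by simp
    qed (use IH False in simp)
  qed
qed

lemma face_idx_less_nbsp: "face_idx p T e < nbsp T p"
  using clamped_length by (auto simp: face_idx_def nbsp_def)

lemma bspl_at_face:
  assumes "e = 0 \<or> e = 1" "j < nbsp T p"
  shows "bspl T p j e = (if j = face_idx p T e then 1 else 0)"
  using assms bspl_at_0[of p j] bspl_at_1[of p j]
  by (auto simp: face_idx_def nbsp_def)

lemma face_in_closure_nonzero_face_bspl:
  assumes "e = 0 \<or> e = 1"
  shows "e \<in> closure {t. bspl T p (face_idx p T e) t \<noteq> 0}"
proof -
  have "bspl T p (face_idx p T e) e = 1"
    using bspl_at_face[OF assms face_idx_less_nbsp] by simp
  then show ?thesis
    by (intro closure_subset[THEN subsetD]) simp
qed

lemma closure_nonzero_face_bspl_subset: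
  "closure {t. bspl T p (face_idx p T e) t \<noteq> 0} \<subseteq> face_span p T e"
proof (rule closure_minimal)
  let ?j = "face_idx p T e"
  have j: "?j + p + 1 < length T"
    using face_idx_less_nbsp[of e] unfolding nbsp_def by linarith
  have "{t. bspl T p ?j t \<noteq> 0} \<subseteq> {T ! ?j .. T ! (?j + p + 1)}"
  proof
    fix t assume "t \<in> {t. bspl T p ?j t \<noteq> 0}"
    then have "\<not> (t < T ! ?j \<or> T ! (?j + p + 1) < t)"
      using bspl_eq_0_outside[OF clamped_sorted j] by blast
    then show "t \<in> {T ! ?j .. T ! (?j + p + 1)}"
      by auto
  qed
  also have "\<dots> = face_span p T e"
    using clamped_nth_eq_0[of 0] clamped_nth_eq_1[of "length T - 1"]
      clamped_length
    by (auto simp: face_idx_def face_span_def Suc_diff_Suc numeral_2_eq_2)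
  finally show "{t. bspl T p ?j t \<noteq> 0} \<subseteq> face_span p T e" .
qed (simp add: face_span_def)

lemma face_span_subset_unit: "face_span p T e \<subseteq> {0..1}"
  using clamped_nth_bounds[of "Suc p"]
    clamped_nth_bounds[of "length T - Suc (Suc p)"] clamped_length
  by (auto simp: face_span_def)

lemma face_span_subset_knot_span:
  assumes "e = 0 \<or> e = 1" "j + 1 < length T" "T ! j \<le> e" "e \<le> T ! (j + 1)" "T ! j < T ! (j + 1)"
  shows "face_span p T e \<subseteq> {T ! j .. T ! (j + 1)}"
  using assms(1)
proof
  assume "e = 0"
  then have "T ! j = 0"
    using assms clamped_nth_bounds[of j] by auto
  then have "T ! Suc p \<le> T ! (j + 1)"
    using assms(2,5) by (intro clamped_first_interior_le) auto
  then show ?thesis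
    using \<open>e = 0\<close> \<open>T ! j = 0\<close> by (auto simp: face_span_def)
next
  assume "e = 1"
  then have "T ! (j + 1) = 1"
    using assms clamped_nth_bounds[of "j + 1"] by auto
  then have "T ! j \<le> T ! (length T - Suc (Suc p))"
    using assms(2,5) by (intro clamped_le_last_interior) auto
  then show ?thesis
    using \<open>e = 1\<close> \<open>T ! (j + 1) = 1\<close> by (auto simp: face_span_def)
qed

end

lemma face_span_antimono:
  assumes clamped: "clamped_knots p T" and clamped': "clamped_knots p T'" and "set T \<subseteq> set T'"
  shows "face_span p T' e \<subseteq> face_span p T e"
proof -
  have in_T: "T ! Suc p \<in> set T'" "T ! (length T - Suc (Suc p)) \<in> set T'"
    using assms(3) clamped_length[OF clamped] by auto
  have "T' ! Suc p \<le> T ! Suc p"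
    using clamped_nth_pos_iff[OF clamped, of "Suc p"] clamped_length[OF clamped]
    by (intro clamped_first_interior_le[OF clamped' in_T(1)]) auto
  moreover have "T ! (length T - Suc (Suc p)) \<le> T' ! (length T' - Suc (Suc p))"
    using clamped_nth_less_one_iff[OF clamped, of "length T - Suc (Suc p)"] clamped_length[OF clamped]
    by (intro clamped_le_last_interior[OF clamped' in_T(2)]) auto
  ultimately show ?thesis
    by (auto simp: face_span_def)
qed

section \<open>Restriction to a face\<close>

lemma hier_mesh_antimono:
  assumes "hier_mesh d Ks \<Omega>" "m \<le> n"
  shows "\<Omega> n \<subseteq> \<Omega> m"
  using assms(2)
proof (induction rule: dec_induct)
  case (step n)
  then show ?case
    using assms(1) unfolding hier_mesh_def by blast
qed simp

lemma unit_box_fill_coord: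
  assumes "x \<in> carrier_pts d" "x(I := a) \<in> unit_box d" "x I \<in> {0..1}"
  shows "x \<in> unit_box d"
  using assms unfolding unit_box_def by (auto split: if_splits)

lemma cell_fill_coord:
  assumes cell: "c \<in> cells d Ks m" and "I < d"
    and clamped: "clamped_knots p (knots_lvl (Ks ! I) m)" and face: "e = 0 \<or> e = 1"
    and x: "x \<in> carrier_pts d" "x(I := e) \<in> c" "x I \<in> face_span p (knots_lvl (Ks ! I) m) e"
  shows "x \<in> c"
proof -
  obtain js where c: "c = {x \<in> carrier_pts d. \<forall>i<d. knots_lvl (Ks ! i) m ! js i \<le> x i
                                            \<and> x i \<le> knots_lvl (Ks ! i) m ! (js i + 1)}"
    and js: "\<forall>i<d. js i + 1 < length (knots_lvl (Ks ! i) m)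
                   \<and> knots_lvl (Ks ! i) m ! js i < knots_lvl (Ks ! i) m ! (js i + 1)"
    using cell unfolding cells_def by blast
  let ?T = "knots_lvl (Ks ! I) m"
  have "?T ! js I \<le> e \<and> e \<le> ?T ! (js I + 1)"
    using x(2) \<open>I < d\<close> unfolding c by auto
  then have "x I \<in> {?T ! js I .. ?T ! (js I + 1)}"
    using face_span_subset_knot_span[OF clamped face] js \<open>I < d\<close> x(3) by blast
  then show ?thesis
    using x(1,2) unfolding c by (auto split: if_splits)
qed

lemma cylinder_subset_iff_subset_restr_set:
  assumes "I < d"
    and fill: "\<And>x. x \<in> carrier_pts d \<Longrightarrow> x(I := e) \<in> \<Omega>' \<Longrightarrow> x I \<in> A \<Longrightarrow> x \<in> \<Omega>'"
    and "S \<subseteq> A" "e \<in> S" "G \<subseteq> carrier_pts (d - 1)"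
  shows "{x. x I \<in> S \<and> drop_coord I x \<in> G} \<subseteq> \<Omega>' \<longleftrightarrow> G \<subseteq> restr_set I e \<Omega>'"
proof
  assume cyl: "{x. x I \<in> S \<and> drop_coord I x \<in> G} \<subseteq> \<Omega>'"
  show "G \<subseteq> restr_set I e \<Omega>'"
  proof
    fix y assume "y \<in> G"
    then have "ins_coord I e y \<in> \<Omega>'"
      using cyl \<open>e \<in> S\<close> by auto
    then show "y \<in> restr_set I e \<Omega>'"
      unfolding restr_set_def by (intro image_eqI[of _ _ "ins_coord I e y"]) simp_all
  qed
next
  assume G: "G \<subseteq> restr_set I e \<Omega>'"
  show "{x. x I \<in> S \<and> drop_coord I x \<in> G} \<subseteq> \<Omega>'"
  proof
    fix x assume "x \<in> {x. x I \<in> S \<and> drop_coord I x \<in> G}"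
    then have x: "x I \<in> S" "drop_coord I x \<in> G" by auto
    then obtain z where z: "z \<in> \<Omega>'" "z I = e" "drop_coord I z = drop_coord I x"
      using G unfolding restr_set_def by auto
    have "x(I := e) = z"
      using ins_coord_drop_coord_upd[of I e x] ins_coord_drop_coord[of I z] z by simp
    moreover have "x \<in> carrier_pts d"
      using x(2) assms(5) drop_coord_in_carrier_pts_iff[OF \<open>I < d\<close>] by blast
    ultimately show "x \<in> \<Omega>'"
      using fill z(1) x(1) assms(3) by blast
  qed
qed

lemma restr_set_mono: "A \<subseteq> B \<Longrightarrow> restr_set I e A \<subseteq> restr_set I e B"
  unfolding restr_set_def by blast

locale face_restriction =
  fixes d :: nat and Ks :: "real list list" and ps :: "nat list"
    and \<Omega> :: "nat \<Rightarrow> (nat \<Rightarrow> real) set" and I :: nat and e :: real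
  assumes length_Ks: "length Ks = d" and length_ps: "length ps = d"
    and open_knots_I: "open_knot_vector (ps ! I) (Ks ! I)"
    and mesh: "hier_mesh d Ks \<Omega>"
    and I_less: "I < d" and face: "e = 0 \<or> e = 1"
begin

abbreviation normal_knots :: "nat \<Rightarrow> real list" where
  "normal_knots k \<equiv> knots_lvl (Ks ! I) k"

abbreviation face_bspl_idx :: "nat \<Rightarrow> nat" where
  "face_bspl_idx k \<equiv> face_idx (ps ! I) (normal_knots k) e"

abbreviation tensor_bspl_E :: "nat \<Rightarrow> (nat \<Rightarrow> nat) \<Rightarrow> (nat \<Rightarrow> real) \<Rightarrow> real" where
  "tensor_bspl_E \<equiv> tensor_bspl (d - 1) (del_nth I Ks) (del_nth I ps)"

lemma clamped_normal_knots: "clamped_knots (ps ! I) (normal_knots k)"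
  using clamped_knots_lvl[OF clamped_knots_if_open_knot_vector[OF open_knots_I]] .

lemma restr_fun_tensor_bspl_face:
  assumes "js \<in> bspl_indices d Ks ps k"
  shows "restr_fun I e (tensor_bspl d Ks ps k js)
         = (if js I = face_bspl_idx k then tensor_bspl_E k (js \<circ> skip_idx I) else (\<lambda>_. 0))"
proof -
  have "js I < nbsp (normal_knots k) (ps ! I)"
    using assms bspl_indices_split[OF I_less length_Ks length_ps] by blast
  then show ?thesis
    using bspl_at_face[OF clamped_normal_knots face]
    by (simp add: restr_fun_tensor_bspl[OF I_less length_Ks length_ps] fun_eq_iff)
qed

(* Omega n is saturated in the normal direction over fill_span n, and for n <= Suc k
   the latter contains the support of the face B-spline of level k. *)
definition fill_span :: "nat \<Rightarrow> real set" where
  "fill_span n = (case n of 0 \<Rightarrow> {0..1} | Suc m \<Rightarrow> face_span (ps ! I) (normal_knots m) e)"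

lemma mesh_fill_normal:
  assumes "x \<in> carrier_pts d" "x(I := e) \<in> \<Omega> n" "x I \<in> fill_span n"
  shows "x \<in> \<Omega> n"
proof (cases n)
  case 0
  moreover have "\<Omega> 0 = unit_box d"
    using mesh by (simp add: hier_mesh_def)
  ultimately show ?thesis
    using assms unit_box_fill_coord[of x d I e] by (simp add: fill_span_def)
next
  case (Suc m)
  obtain C where C: "C \<subseteq> cells d Ks m" "\<Omega> (Suc m) = \<Union>C"
    using mesh unfolding hier_mesh_def by meson
  then obtain c where c: "c \<in> cells d Ks m" "c \<subseteq> \<Omega> n" "x(I := e) \<in> c"
    using assms(2) Suc by blast
  have "x I \<in> face_span (ps ! I) (normal_knots m) e"
    using assms(3) Suc by (simp add: fill_span_def)
  then have "x \<in> c"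
    by (rule cell_fill_coord[OF c(1) I_less clamped_normal_knots face assms(1) c(3)])
  then show ?thesis
    using c(2) by blast
qed

lemma closure_face_bspl_subset_fill_span:
  assumes "n \<le> Suc k"
  shows "closure {t. bspl (normal_knots k) (ps ! I) (face_bspl_idx k) t \<noteq> 0} \<subseteq> fill_span n"
proof (cases n)
  case 0
  then show ?thesis
    using order_trans[OF closure_nonzero_face_bspl_subset[OF clamped_normal_knots]
        face_span_subset_unit[OF clamped_normal_knots]]
    by (simp add: fill_span_def)
next
  case (Suc m)
  have "closure {t. bspl (normal_knots k) (ps ! I) (face_bspl_idx k) t \<noteq> 0}
        \<subseteq> face_span (ps ! I) (normal_knots k) e"
    by (rule closure_nonzero_face_bspl_subset[OF clamped_normal_knots])
  also have "\<dots> \<subseteq> face_span (ps ! I) (normal_knots m) e"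
    using assms Suc by (intro face_span_antimono clamped_normal_knots set_knots_lvl_mono) simp
  finally show ?thesis
    using Suc by (simp add: fill_span_def)
qed

lemma supp_tensor_bspl_subset_iff:
  assumes "n \<le> Suc k" "js I = face_bspl_idx k"
  shows "supp d (tensor_bspl d Ks ps k js) \<subseteq> \<Omega> n
         \<longleftrightarrow> supp (d - 1) (tensor_bspl_E k (js \<circ> skip_idx I)) \<subseteq> restr_set I e (\<Omega> n)"
proof -
  have "supp d (tensor_bspl d Ks ps k js)
        = {x. x I \<in> closure {t. bspl (normal_knots k) (ps ! I) (face_bspl_idx k) t \<noteq> 0}
              \<and> drop_coord I x \<in> supp (d - 1) (tensor_bspl_E k (js \<circ> skip_idx I))}"
    using assms(2) tensor_bspl_split[OF I_less length_Ks length_ps]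
    by (intro supp_separate_coord[OF I_less]) simp
  then show ?thesis
    using cylinder_subset_iff_subset_restr_set[OF I_less mesh_fill_normal
        closure_face_bspl_subset_fill_span[OF assms(1)]
        face_in_closure_nonzero_face_bspl[OF clamped_normal_knots face] supp_subset_carrier_pts]
    by (simp only:)
qed

abbreviation hier_basis_E :: "((nat \<Rightarrow> real) \<Rightarrow> real) set" where
  "hier_basis_E \<equiv> hier_basis (d - 1) (del_nth I Ks) (del_nth I ps) (\<lambda>k. restr_set I e (\<Omega> k))"

lemma hier_basis_restr_nonzeroE:
  assumes "\<beta> \<in> hier_basis d Ks ps \<Omega>" "restr_fun I e \<beta> \<noteq> (\<lambda>_. 0)"
  obtains k js where "js \<in> bspl_indices d Ks ps k" "js I = face_bspl_idx k"
    "\<beta> = tensor_bspl d Ks ps k js" "restr_fun I e \<beta> = tensor_bspl_E k (js \<circ> skip_idx I)"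
    "supp (d - 1) (restr_fun I e \<beta>) \<subseteq> restr_set I e (\<Omega> k)"
    "\<not> supp (d - 1) (restr_fun I e \<beta>) \<subseteq> restr_set I e (\<Omega> (Suc k))"
proof -
  obtain k js where js: "js \<in> bspl_indices d Ks ps k" and \<beta>: "\<beta> = tensor_bspl d Ks ps k js"
    and sub: "supp d \<beta> \<subseteq> \<Omega> k" and not_sub: "\<not> supp d \<beta> \<subseteq> \<Omega> (Suc k)"
    using assms(1) unfolding mem_hier_basis_iff by blast
  have face_js: "js I = face_bspl_idx k"
    using assms(2) restr_fun_tensor_bspl_face[OF js] \<beta> by (auto split: if_splits)
  then have restr: "restr_fun I e \<beta> = tensor_bspl_E k (js \<circ> skip_idx I)"
    using restr_fun_tensor_bspl_face[OF js] \<beta> by simp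
  have "supp (d - 1) (tensor_bspl_E k (js \<circ> skip_idx I)) \<subseteq> restr_set I e (\<Omega> k)"
    using sub supp_tensor_bspl_subset_iff[of k k js, OF _ face_js] \<beta> by simp
  moreover have "\<not> supp (d - 1) (tensor_bspl_E k (js \<circ> skip_idx I)) \<subseteq> restr_set I e (\<Omega> (Suc k))"
    using not_sub supp_tensor_bspl_subset_iff[of "Suc k" k js, OF _ face_js] \<beta> by simp
  ultimately show thesis
    using that[OF js face_js \<beta> restr] unfolding restr by blast
qed

lemma restr_fun_mem_hier_basis_E:
  assumes "\<beta> \<in> hier_basis d Ks ps \<Omega>" "restr_fun I e \<beta> \<noteq> (\<lambda>_. 0)"
  shows "restr_fun I e \<beta> \<in> hier_basis_E"
proof -
  obtain k js where "js \<in> bspl_indices d Ks ps k"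
    "restr_fun I e \<beta> = tensor_bspl_E k (js \<circ> skip_idx I)"
    "supp (d - 1) (restr_fun I e \<beta>) \<subseteq> restr_set I e (\<Omega> k)"
    "\<not> supp (d - 1) (restr_fun I e \<beta>) \<subseteq> restr_set I e (\<Omega> (Suc k))"
    using hier_basis_restr_nonzeroE[OF assms] by metis
  then show ?thesis
    unfolding mem_hier_basis_iff using bspl_indices_split[OF I_less length_Ks length_ps] by blast
qed

lemma hier_basis_E_is_restr_fun:
  assumes "\<gamma> \<in> hier_basis_E"
  shows "\<exists>\<beta>\<in>hier_basis d Ks ps \<Omega>. \<gamma> = restr_fun I e \<beta> \<and> restr_fun I e \<beta> \<noteq> (\<lambda>_. 0)"
proof -
  obtain k js' where js': "js' \<in> bspl_indices (d - 1) (del_nth I Ks) (del_nth I ps) k"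
    and \<gamma>: "\<gamma> = tensor_bspl_E k js'"
    and sub: "supp (d - 1) \<gamma> \<subseteq> restr_set I e (\<Omega> k)"
    and not_sub: "\<not> supp (d - 1) \<gamma> \<subseteq> restr_set I e (\<Omega> (Suc k))"
    using assms unfolding mem_hier_basis_iff by blast
  define js where "js = ins_idx I (face_bspl_idx k) js'"
  have js: "js \<in> bspl_indices d Ks ps k"
    using js' face_idx_less_nbsp[OF clamped_normal_knots]
    by (simp add: js_def bspl_indices_split[OF I_less length_Ks length_ps])
  have face_js: "js I = face_bspl_idx k" and skip_js: "js \<circ> skip_idx I = js'"
    by (simp_all add: js_def)
  have "restr_fun I e (tensor_bspl d Ks ps k js) = \<gamma>"
    using restr_fun_tensor_bspl_face[OF js] face_js skip_js \<gamma> by simp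
  moreover have "tensor_bspl d Ks ps k js \<in> hier_basis d Ks ps \<Omega>"
    unfolding mem_hier_basis_iff using js sub not_sub \<gamma>
      supp_tensor_bspl_subset_iff[of k k js, OF _ face_js]
      supp_tensor_bspl_subset_iff[of "Suc k" k js, OF _ face_js]
    by (auto simp: skip_js)
  moreover have "\<gamma> \<noteq> (\<lambda>_. 0)"
    using not_sub by (auto simp: supp_def)
  ultimately show ?thesis
    by metis
qed

lemma restr_fun_inj_on_hier_basis:
  assumes "\<beta>1 \<in> hier_basis d Ks ps \<Omega>" "\<beta>2 \<in> hier_basis d Ks ps \<Omega>"
    and nonzero: "restr_fun I e \<beta>1 \<noteq> (\<lambda>_. 0)" and eq: "restr_fun I e \<beta>1 = restr_fun I e \<beta>2"
  shows "\<beta>1 = \<beta>2"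
proof -
  obtain k1 js1 where js1: "js1 I = face_bspl_idx k1" "\<beta>1 = tensor_bspl d Ks ps k1 js1"
    "restr_fun I e \<beta>1 = tensor_bspl_E k1 (js1 \<circ> skip_idx I)"
    and sub1: "supp (d - 1) (restr_fun I e \<beta>1) \<subseteq> restr_set I e (\<Omega> k1)"
    and not_sub1: "\<not> supp (d - 1) (restr_fun I e \<beta>1) \<subseteq> restr_set I e (\<Omega> (Suc k1))"
    using hier_basis_restr_nonzeroE[OF assms(1) nonzero] by metis
  obtain k2 js2 where js2: "js2 I = face_bspl_idx k2" "\<beta>2 = tensor_bspl d Ks ps k2 js2"
    "restr_fun I e \<beta>2 = tensor_bspl_E k2 (js2 \<circ> skip_idx I)"
    and sub2: "supp (d - 1) (restr_fun I e \<beta>2) \<subseteq> restr_set I e (\<Omega> k2)"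
    and not_sub2: "\<not> supp (d - 1) (restr_fun I e \<beta>2) \<subseteq> restr_set I e (\<Omega> (Suc k2))"
    using hier_basis_restr_nonzeroE[OF assms(2)] nonzero eq by metis
  have no_lower_level: "\<not> k < k'"
    if "supp (d - 1) \<rho> \<subseteq> restr_set I e (\<Omega> k')"
      "\<not> supp (d - 1) \<rho> \<subseteq> restr_set I e (\<Omega> (Suc k))" for \<rho> k k'
  proof
    assume "k < k'"
    then have "restr_set I e (\<Omega> k') \<subseteq> restr_set I e (\<Omega> (Suc k))"
      by (intro restr_set_mono hier_mesh_antimono[OF mesh]) simp
    then show False
      using that by blast
  qed
  have "k1 = k2"
    using no_lower_level[OF sub2[folded eq] not_sub1] no_lower_level[OF sub1 not_sub2[folded eq]] by simp
  show ?thesis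
  proof
    fix x
    show "\<beta>1 x = \<beta>2 x"
      using tensor_bspl_split[OF I_less length_Ks length_ps, of k1 js1 x]
        tensor_bspl_split[OF I_less length_Ks length_ps, of k2 js2 x] js1 js2 eq \<open>k1 = k2\<close>
      by simp
  qed
qed

end

theorem proposition3p1:
  fixes d :: nat and Ks :: "real list list" and ps :: "nat list"
    and \<Omega> :: "nat \<Rightarrow> (nat \<Rightarrow> real) set" and I :: nat and e :: real
  assumes "2 \<le> d" and "length Ks = d" and "length ps = d"
    and "\<forall>i<d. 1 \<le> ps ! i \<and> open_knot_vector (ps ! i) (Ks ! i)"
    and "hier_mesh d Ks \<Omega>"
    and "I < d" and "e = 0 \<or> e = 1"
  shows "hier_basis (d - 1) (del_nth I Ks) (del_nth I ps) (\<lambda>k. restr_set I e (\<Omega> k))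
           = {restr_fun I e \<beta> | \<beta>. \<beta> \<in> hier_basis d Ks ps \<Omega> \<and> restr_fun I e \<beta> \<noteq> (\<lambda>_. 0)}
       \<and> (\<forall>\<beta>1 \<in> hier_basis d Ks ps \<Omega>. \<forall>\<beta>2 \<in> hier_basis d Ks ps \<Omega>.
            \<beta>1 \<noteq> \<beta>2 \<and> restr_fun I e \<beta>1 \<noteq> (\<lambda>_. 0) \<longrightarrow> restr_fun I e \<beta>1 \<noteq> restr_fun I e \<beta>2)"
proof -
  interpret face_restriction d Ks ps \<Omega> I e
    using assms by unfold_locales auto
  have "hier_basis_E
        = {restr_fun I e \<beta> | \<beta>. \<beta> \<in> hier_basis d Ks ps \<Omega> \<and> restr_fun I e \<beta> \<noteq> (\<lambda>_. 0)}"
    using hier_basis_E_is_restr_fun restr_fun_mem_hier_basis_E by blast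
  then show ?thesis
    using restr_fun_inj_on_hier_basis by blast
qed

end
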